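(* Let $m\ge2$, $n\ge1$, $f_i:\mathbb{R}^n\to\mathbb{R}$ smooth, $F(\boldsymbol\theta)=\sum_{i=1}^mf_i(\boldsymbol\theta_i)$, $\mathbf{r}\in\mathbb{R}^n$. Let $\alpha>0$, let $\boldsymbol\theta^0\in\mathbb{R}^{mn}$ satisfy $(\mathbf{1}_m^\top\otimes\mathbf{I}_n)\boldsymbol\theta^0=\mathbf{r}$, let $\{\mathbf{n}^k\}\subset\mathbb{R}^{mn}$ be any noise sequence, and let $\Psi_{\boldsymbol\theta^0}(\mathbf{x})=F(\boldsymbol\theta^0+\sqrt{\hat{\mathbf{L}}}\mathbf{x})$. Then the sequence generated by $\boldsymbol\theta^{k+1}=\boldsymbol\theta^k-\alpha(\hat{\mathbf{L}}\nabla F(\boldsymbol\theta^k)+\sqrt{\hat{\mathbf{L}}}\mathbf{n}^k)$ from $\boldsymbol\theta^0$ coincides with the sequence generated by $$\mathbf{x}^{k+1}=\mathbf{x}^k-\alpha(\nabla\Psi_{\boldsymbol\theta^0}(\mathbf{x}^k)+\mathbf{n}^k),\qquad\boldsymbol\theta^{k+1}=\boldsymbol\theta^0+\sqrt{\hat{\mathbf{L}}}\mathbf{x}^{k+1},$$ from $\mathbf{x}^0=\mathbf{0}$ and the same $\boldsymbol\theta^0$, with the same perturbations $\{\mathbf{n}^k\}$ and step-size $\alpha$.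
   Context: $\boldsymbol\theta=[\boldsymbol\theta_1^\top,\dots,\boldsymbol\theta_m^\top]^\top\in\mathbb{R}^{mn}$, $\nabla F$ the stacked gradient. $\mathbf{L}$ is the Laplacian of an undirected graph on $\{1,\dots,m\}$; $\sqrt{\mathbf{L}}$ its unique symmetric positive semidefinite square root; $\hat{\mathbf{L}}=\mathbf{L}\otimes\mathbf{I}_n$, $\sqrt{\hat{\mathbf{L}}}=\sqrt{\mathbf{L}}\otimes\mathbf{I}_n$. *)

theory Defs
  imports "HOL-Analysis.Analysis"
begin

text \<open>Stacked vectors in R^(mn) are modelled as real^'n^'m: block i is theta $ i in R^n.\<close>

definition laplacian :: "('m::finite \<Rightarrow> 'm \<Rightarrow> bool) \<Rightarrow> real^'m^'m" where
  "laplacian E = (\<chi> i j. if i = j then real (card {k. E i k}) else if E i j then -1 else 0)"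

text \<open>Action of the Kronecker product A (x) I_n on a stacked vector.\<close>
definition kron_apply :: "real^'m^'m \<Rightarrow> real^'n^'m \<Rightarrow> real^'n^'m" where
  "kron_apply A v = (\<chi> i. \<Sum>j\<in>UNIV. (A $ i $ j) *\<^sub>R (v $ j))"

text \<open>Action of 1_m^T (x) I_n.\<close>
definition block_sum :: "real^'n^'m \<Rightarrow> real^'n" where
  "block_sum v = (\<Sum>i\<in>UNIV. v $ i)"

definition is_psd_sqrt :: "real^'m^'m \<Rightarrow> real^'m^'m \<Rightarrow> bool" where
  "is_psd_sqrt S L \<longleftrightarrow> transpose S = S \<and> (\<forall>v. 0 \<le> v \<bullet> (S *v v)) \<and> S ** S = L"

definition grad :: "(real^'n \<Rightarrow> real) \<Rightarrow> real^'n \<Rightarrow> real^'n" where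
  "grad g x = (\<chi> j. frechet_derivative g (at x) (axis j 1))"

definition grad_stack :: "(real^'n^'m \<Rightarrow> real) \<Rightarrow> real^'n^'m \<Rightarrow> real^'n^'m" where
  "grad_stack g x = (\<chi> i j. frechet_derivative g (at x) (axis i (axis j 1)))"

definition partial_deriv :: "'n \<Rightarrow> (real^'n \<Rightarrow> real) \<Rightarrow> (real^'n \<Rightarrow> real)" where
  "partial_deriv j g = (\<lambda>x. frechet_derivative g (at x) (axis j 1))"

fun iter_partial :: "'n list \<Rightarrow> (real^'n \<Rightarrow> real) \<Rightarrow> (real^'n \<Rightarrow> real)" where
  "iter_partial [] g = g"
| "iter_partial (j # js) g = partial_deriv j (iter_partial js g)"

definition smooth :: "(real^'n::finite \<Rightarrow> real) \<Rightarrow> bool" where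
  "smooth g \<longleftrightarrow> (\<forall>js. (\<forall>x. iter_partial js g differentiable (at x))
                        \<and> continuous_on UNIV (iter_partial js g))"

definition sepF :: "('m::finite \<Rightarrow> real^'n \<Rightarrow> real) \<Rightarrow> real^'n^'m \<Rightarrow> real" where
  "sepF f \<theta> = (\<Sum>i\<in>UNIV. f i (\<theta> $ i))"

end

theory Submission
  imports Defs
begin

text \<open>Write \<open>S\<^sub>n = S \<otimes> I\<^sub>n\<close> (the map \<open>kron_apply S\<close>). Since \<open>S\<close> is
  symmetric, the chain rule gives \<open>\<nabla>\<Psi>(x) = S\<^sub>n \<nabla>F(\<theta>\<^sup>0 + S\<^sub>n x)\<close>.
  Multiplying the \<open>x\<close>-recursion by \<open>S\<^sub>n\<close> and using \<open>S S = L\<close> turns it into the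
  \<open>\<theta>\<close>-recursion for \<open>\<theta>\<^sup>0 + S\<^sub>n x\<^sup>k\<close>, so the two sequences agree by induction.\<close>

lemma linear_kron_apply: "linear (kron_apply A)"
  by (rule linearI)
    (simp_all add: kron_apply_def vec_eq_iff sum.distrib scaleR_add_right scaleR_sum_right mult_ac)

lemma kron_apply_kron_apply: "kron_apply A (kron_apply B v) = kron_apply (A ** B) v"
proof -
  have "(\<Sum>j\<in>UNIV. A $ i $ j *\<^sub>R (\<Sum>k\<in>UNIV. B $ j $ k *\<^sub>R v $ k))
      = (\<Sum>k\<in>UNIV. (\<Sum>j\<in>UNIV. A $ i $ j * B $ j $ k) *\<^sub>R v $ k)" for i
    by (simp add: scaleR_sum_right scaleR_sum_left) (rule sum.swap)
  then show ?thesis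
    by (simp add: kron_apply_def matrix_matrix_mult_def vec_eq_iff)
qed

lemma inner_kron_apply: "u \<bullet> kron_apply A v = kron_apply (transpose A) u \<bullet> v"
proof -
  have "u \<bullet> kron_apply A v = (\<Sum>i\<in>UNIV. \<Sum>j\<in>UNIV. A $ i $ j * (u $ i \<bullet> v $ j))"
    unfolding inner_vec_def[of u] by (simp add: kron_apply_def inner_sum_right)
  also have "\<dots> = (\<Sum>j\<in>UNIV. \<Sum>i\<in>UNIV. A $ i $ j * (u $ i \<bullet> v $ j))"
    by (rule sum.swap)
  also have "\<dots> = kron_apply (transpose A) u \<bullet> v"
    unfolding inner_vec_def[of "kron_apply (transpose A) u"]
    by (simp add: kron_apply_def transpose_def inner_sum_left)
  finally show ?thesis .
qed

lemma vec_eq_sum_axis: "h = (\<Sum>i\<in>UNIV. axis i (h $ i))"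
  by (simp add: vec_eq_iff axis_def if_distrib cong: if_cong)

lemma linear_axis: "linear (axis i)"
  by (rule linearI) (simp_all add: vec_eq_iff axis_def)

lemma linear_eq_sum_axis:
  assumes "linear D"
  shows "D h = (\<Sum>i\<in>UNIV. D (axis i (h $ i)))"
  using linear_sum[OF assms, of "\<lambda>i. axis i (h $ i)" UNIV] by (simp flip: vec_eq_sum_axis)

lemma linear_functional_eq_inner:
  fixes D :: "real^'n::finite \<Rightarrow> real"
  assumes "linear D"
  shows "D h = (\<chi> j. D (axis j 1)) \<bullet> h"
proof -
  have "axis j (h $ j) = h $ j *\<^sub>R axis j 1" for j
    by (simp add: vec_eq_iff axis_def)
  then have "D (axis j (h $ j)) = h $ j * D (axis j 1)" for j
    by (simp add: linear_scale[OF assms])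
  then show ?thesis
    using linear_eq_sum_axis[OF assms, of h] by (simp add: inner_vec_def mult.commute)
qed

lemma linear_stack_functional_eq_inner:
  fixes D :: "real^'n::finite^'m::finite \<Rightarrow> real"
  assumes "linear D"
  shows "D h = (\<chi> i j. D (axis i (axis j 1))) \<bullet> h"
proof -
  have "linear (\<lambda>v. D (axis i v))" for i
    using linear_compose[OF linear_axis assms] by (simp add: o_def)
  then have "D (axis i (h $ i)) = (\<chi> j. D (axis i (axis j 1))) \<bullet> h $ i" for i
    by (rule linear_functional_eq_inner)
  then show ?thesis
    using linear_eq_sum_axis[OF assms, of h] by (simp add: inner_vec_def)
qed

lemma has_derivative_grad:
  assumes "g differentiable (at p)"
  shows "(g has_derivative (\<lambda>h. grad g p \<bullet> h)) (at p)"
proof -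
  have D: "(g has_derivative frechet_derivative g (at p)) (at p)"
    using assms by (rule frechet_derivative_works[THEN iffD1])
  have "frechet_derivative g (at p) = (\<lambda>h. grad g p \<bullet> h)"
    unfolding grad_def
    by (rule ext, rule linear_functional_eq_inner[OF has_derivative_linear[OF D]])
  with D show ?thesis by simp
qed

lemma has_derivative_grad_stack:
  assumes "g differentiable (at p)"
  shows "(g has_derivative (\<lambda>h. grad_stack g p \<bullet> h)) (at p)"
proof -
  have D: "(g has_derivative frechet_derivative g (at p)) (at p)"
    using assms by (rule frechet_derivative_works[THEN iffD1])
  have "frechet_derivative g (at p) = (\<lambda>h. grad_stack g p \<bullet> h)"
    unfolding grad_stack_def
    by (rule ext, rule linear_stack_functional_eq_inner[OF has_derivative_linear[OF D]])
  with D show ?thesis by simp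
qed

lemma grad_stack_eqI:
  assumes "(g has_derivative (\<lambda>h. G \<bullet> h)) (at p)"
  shows "grad_stack g p = G"
  using frechet_derivative_at[OF assms, symmetric]
  by (simp add: grad_stack_def vec_eq_iff inner_axis)

lemma has_derivative_sepF:
  assumes "\<And>i. f i differentiable (at (\<theta> $ i))"
  shows "(sepF f has_derivative (\<lambda>h. (\<chi> i. grad (f i) (\<theta> $ i)) \<bullet> h)) (at \<theta>)"
proof -
  have "((\<lambda>\<theta>. f i (\<theta> $ i)) has_derivative (\<lambda>h. grad (f i) (\<theta> $ i) \<bullet> h $ i)) (at \<theta>)" for i
    using diff_chain_at[OF bounded_linear_vec_nth[THEN bounded_linear.has_derivative,
          OF has_derivative_ident] has_derivative_grad[OF assms]]
    by (simp add: o_def)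
  then have "(sepF f has_derivative (\<lambda>h. \<Sum>i\<in>UNIV. grad (f i) (\<theta> $ i) \<bullet> h $ i)) (at \<theta>)"
    unfolding sepF_def by (rule has_derivative_sum)
  then show ?thesis
    by (simp add: inner_vec_def)
qed

lemma grad_stack_comp_kron_affine:
  assumes "g differentiable (at (t + kron_apply A x))"
  shows "grad_stack (\<lambda>y. g (t + kron_apply A y)) x
    = kron_apply (transpose A) (grad_stack g (t + kron_apply A x))"
proof (rule grad_stack_eqI)
  have "bounded_linear (kron_apply A)"
    using linear_kron_apply linear_conv_bounded_linear by blast
  from has_derivative_add[OF has_derivative_const
      bounded_linear.has_derivative[OF this has_derivative_ident]]
  have "((\<lambda>y. t + kron_apply A y) has_derivative kron_apply A) (at x)"
    by simp
  from diff_chain_at[OF this has_derivative_grad_stack[OF assms]]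
  show "((\<lambda>y. g (t + kron_apply A y)) has_derivative
      (\<lambda>h. kron_apply (transpose A) (grad_stack g (t + kron_apply A x)) \<bullet> h)) (at x)"
    by (simp add: o_def inner_kron_apply)
qed

lemma smooth_imp_differentiable:
  assumes "smooth g"
  shows "g differentiable (at x)"
  using assms[unfolded smooth_def, THEN spec[of _ "[]"]] by simp

theorem proposition4:
  fixes f :: "'m::finite \<Rightarrow> real^'n::finite \<Rightarrow> real"
    and E :: "'m \<Rightarrow> 'm \<Rightarrow> bool"
    and S :: "real^'m^'m"
    and r :: "real^'n"
    and \<alpha> :: real
    and \<theta>0 :: "real^'n^'m"
    and noise :: "nat \<Rightarrow> real^'n^'m"
    and \<theta> x :: "nat \<Rightarrow> real^'n^'m"
  assumes m2: "CARD('m) \<ge> 2"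
    and smooth: "\<forall>i. smooth (f i)"
    and E_sym: "\<forall>i j. E i j \<longrightarrow> E j i"
    and E_irrefl: "\<forall>i. \<not> E i i"
    and S_sqrt: "is_psd_sqrt S (laplacian E)"
    and alpha_pos: "\<alpha> > 0"
    and init: "block_sum \<theta>0 = r"
    and theta_0: "\<theta> 0 = \<theta>0"
    and theta_step: "\<forall>k. \<theta> (Suc k) = \<theta> k - \<alpha> *\<^sub>R
          (kron_apply (laplacian E) (\<chi> i. grad (f i) (\<theta> k $ i)) + kron_apply S (noise k))"
    and x_0: "x 0 = 0"
    and x_step: "\<forall>k. x (Suc k) = x k - \<alpha> *\<^sub>R
          (grad_stack (\<lambda>y. sepF f (\<theta>0 + kron_apply S y)) (x k) + noise k)"
  shows "\<forall>k. \<theta> k = \<theta>0 + kron_apply S (x k)"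
proof
  fix k
  have S_sym: "transpose S = S" and S_square: "S ** S = laplacian E"
    using S_sqrt unfolding is_psd_sqrt_def by auto
  have F_deriv: "(sepF f has_derivative (\<lambda>h. (\<chi> i. grad (f i) (p $ i)) \<bullet> h)) (at p)" for p
    using smooth smooth_imp_differentiable by (blast intro: has_derivative_sepF)
  have grad_Psi: "kron_apply S (grad_stack (\<lambda>y. sepF f (\<theta>0 + kron_apply S y)) y)
      = kron_apply (laplacian E) (\<chi> i. grad (f i) ((\<theta>0 + kron_apply S y) $ i))" for y
    using F_deriv[THEN differentiableI] F_deriv[THEN grad_stack_eqI]
    by (simp add: grad_stack_comp_kron_affine S_sym kron_apply_kron_apply S_square)
  note K = linear_kron_apply[of S]
  show "\<theta> k = \<theta>0 + kron_apply S (x k)"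
  proof (induction k)
    case 0
    then show ?case using theta_0 x_0 linear_0[OF K] by simp
  next
    case (Suc k)
    have "\<theta>0 + kron_apply S (x (Suc k)) = \<theta>0 + kron_apply S (x k) - \<alpha> *\<^sub>R
        (kron_apply S (grad_stack (\<lambda>y. sepF f (\<theta>0 + kron_apply S y)) (x k)) + kron_apply S (noise k))"
      using x_step by (simp add: linear_diff[OF K] linear_scale[OF K] linear_add[OF K])
    also have "\<dots> = \<theta> (Suc k)"
      using theta_step grad_Psi[of "x k"] by (simp add: Suc[symmetric])
    finally show ?case by simp
  qed
qed

end
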